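(* Let $T_1,T_2$ be $2\times 2$ matrices with entries in $\{0,1\}$, neither having a zero row, and let $\alpha_i=T_1^{(i)}\otimes T_2^{(i)}$ for $i=1,2$. If $|\alpha_1|=|\alpha_2|=1$, then $h(T)=0$.
   Context: $T_k^{(i)}$ denotes the $i$-th row of $T_k$, and for $v=(v_1,v_2)$, $w=(w_1,w_2)$ the dyadic product is $v\otimes w=(v_1w_1,v_1w_2,v_2w_1,v_2w_2)$; $|\alpha_i|$ is the sum of the entries of $\alpha_i$ (the number of ones). Define sequences $\gamma^{[s_j]}_{i,n}$ ($i,j\in\{1,2\}$, $n\ge0$) by $\gamma^{[s_j]}_{i,0}=1$ and, for $n\ge1$, $$\gamma^{[s_1]}_{i,n}=\sum_{j,k=1}^2T_1(i,j)T_2(i,k)\,\gamma^{[s_1]}_{j,n-1}\gamma^{[s_2]}_{k,n-1},\qquad \gamma^{[s_2]}_{i,n}=\sum_{j=1}^2T_1(i,j)\,\gamma^{[s_1]}_{j,n-1}.$$ (These are the paper's counts of admissible blocks with root symbol $i$ for the $G$-vertex shift $X_T=\{t\in\{1,2\}^G: T_k(t_g,t_{gs_k})=1\}$ on the monoid $G=\langle s_1,s_2\mid s_2s_2=s_2\rangle$.) Let $l_0=1$, $l_1=2$, $l_{k+1}=l_k+l_{k-1}$ and $|E_n|=\sum_{k=0}^n l_k$ (the number of elements of $G$ of word length at most $n$). The entropy is $h(T)=\limsup_{n\to\infty}\frac{\ln(\gamma^{[s_1]}_{1,n}+\gamma^{[s_1]}_{2,n})}{|E_n|}$. *)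

theory Defs
  imports Complex_Main "HOL-Library.Extended_Real"
begin

(* A 2x2 matrix is represented as a function nat => nat => nat; only the
   indices 1,2 are relevant.  T i j is the (i,j) entry. *)
type_synonym mat2 = "nat \<Rightarrow> nat \<Rightarrow> nat"

definition zero_one_mat :: "mat2 \<Rightarrow> bool" where
  "zero_one_mat T \<longleftrightarrow> (\<forall>i\<in>{1,2}. \<forall>j\<in>{1,2}. T i j \<in> {0,1})"

definition no_zero_row :: "mat2 \<Rightarrow> bool" where
  "no_zero_row T \<longleftrightarrow> (\<forall>i\<in>{1,2}. \<exists>j\<in>{1,2}. T i j \<noteq> 0)"

definition dyadic :: "nat \<times> nat \<Rightarrow> nat \<times> nat \<Rightarrow> nat list" where
  "dyadic v w = [fst v * fst w, fst v * snd w, snd v * fst w, snd v * snd w]"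

definition row :: "mat2 \<Rightarrow> nat \<Rightarrow> nat \<times> nat" where
  "row T i = (T i 1, T i 2)"

definition alpha :: "mat2 \<Rightarrow> mat2 \<Rightarrow> nat \<Rightarrow> nat list" where
  "alpha T1 T2 i = dyadic (row T1 i) (row T2 i)"

definition weight :: "nat list \<Rightarrow> nat" where
  "weight a = sum_list a"

fun gam :: "mat2 \<Rightarrow> mat2 \<Rightarrow> nat \<Rightarrow> (nat \<Rightarrow> nat) \<times> (nat \<Rightarrow> nat)" where
  "gam T1 T2 0 = ((\<lambda>i. 1), (\<lambda>i. 1))"
| "gam T1 T2 (Suc n) =
     (let (g1, g2) = gam T1 T2 n in
       ((\<lambda>i. \<Sum>j\<in>{1,2}. \<Sum>k\<in>{1,2}. T1 i j * T2 i k * g1 j * g2 k),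
        (\<lambda>i. \<Sum>j\<in>{1,2}. T1 i j * g1 j)))"

definition gamma_s1 :: "mat2 \<Rightarrow> mat2 \<Rightarrow> nat \<Rightarrow> nat \<Rightarrow> nat" where
  "gamma_s1 T1 T2 i n = fst (gam T1 T2 n) i"

definition gamma_s2 :: "mat2 \<Rightarrow> mat2 \<Rightarrow> nat \<Rightarrow> nat \<Rightarrow> nat" where
  "gamma_s2 T1 T2 i n = snd (gam T1 T2 n) i"

fun lseq :: "nat \<Rightarrow> nat" where
  "lseq 0 = 1"
| "lseq (Suc 0) = 2"
| "lseq (Suc (Suc k)) = lseq (Suc k) + lseq k"

definition card_E :: "nat \<Rightarrow> nat" where
  "card_E n = (\<Sum>k\<le>n. lseq k)"

definition entropy :: "mat2 \<Rightarrow> mat2 \<Rightarrow> ereal" where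
  "entropy T1 T2 = limsup (\<lambda>n. ereal (ln (real (gamma_s1 T1 T2 1 n + gamma_s1 T1 T2 2 n)) / real (card_E n)))"

end

theory Submission
  imports Defs
begin

(* If |alpha_i| = 1 then row i of T1 and of T2 each contain a single 1, so every
   symbol has exactly one admissible successor along each generator.  Hence the
   block counts gamma stay equal to 1, the numerator of the entropy is the
   constant ln 2, and it is divided by |E_n| \<rightarrow> \<infinity>. *)

lemma weight_alpha:
  "weight (alpha T1 T2 i) = (T1 i 1 + T1 i 2) * (T2 i 1 + T2 i 2)"
  by (simp add: weight_def alpha_def dyadic_def row_def algebra_simps)

lemma row_sums_eq_one_if_weight_alpha_eq_one:
  assumes "weight (alpha T1 T2 i) = 1"
  shows "T1 i 1 + T1 i 2 = 1" and "T2 i 1 + T2 i 2 = 1"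
  using assms by (simp_all add: weight_alpha)

lemma gam_eq_one_if_row_sums_eq_one:
  assumes "\<And>i. i \<in> {1,2} \<Longrightarrow> T1 i 1 + T1 i 2 = 1"
    and "\<And>i. i \<in> {1,2} \<Longrightarrow> T2 i 1 + T2 i 2 = 1"
    and "i \<in> {1,2}"
  shows "fst (gam T1 T2 n) i = 1" and "snd (gam T1 T2 n) i = 1"
proof -
  have "\<forall>i\<in>{1,2}. fst (gam T1 T2 n) i = 1 \<and> snd (gam T1 T2 n) i = 1"
  proof (induction n)
    case 0
    show ?case by simp
  next
    case (Suc n)
    obtain g1 g2 where g: "gam T1 T2 n = (g1, g2)" by fastforce
    with Suc have "g1 1 = 1" "g1 2 = 1" "g2 1 = 1" "g2 2 = 1" by auto
    then have "fst (gam T1 T2 (Suc n)) i = (T1 i 1 + T1 i 2) * (T2 i 1 + T2 i 2)"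
      and "snd (gam T1 T2 (Suc n)) i = T1 i 1 + T1 i 2" for i
      by (simp_all add: g algebra_simps)
    with assms(1,2) show ?case by simp
  qed
  with assms(3) show "fst (gam T1 T2 n) i = 1" and "snd (gam T1 T2 n) i = 1"
    by auto
qed

lemma lseq_pos: "lseq k \<ge> 1"
  by (induction k rule: lseq.induct) auto

lemma card_E_ge: "card_E n \<ge> n + 1"
proof -
  have "(\<Sum>k\<le>n. (1::nat)) \<le> (\<Sum>k\<le>n. lseq k)"
    using lseq_pos by (intro sum_mono)
  then show ?thesis by (simp add: card_E_def)
qed

lemma filterlim_card_E_at_top: "filterlim (\<lambda>n. real (card_E n)) at_top sequentially"
proof (rule filterlim_at_top_mono[OF filterlim_real_sequentially])
  show "\<forall>\<^sub>F n in sequentially. real n \<le> real (card_E n)"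
    using card_E_ge by (intro always_eventually allI) (metis Suc_leD Suc_eq_plus1 of_nat_le_iff)
qed

lemma limsup_const_over_card_E: "limsup (\<lambda>n. ereal (c / real (card_E n))) = 0"
proof -
  have "(\<lambda>n. c / real (card_E n)) \<longlonglongrightarrow> 0"
    using filterlim_card_E_at_top
    by (intro tendsto_divide_0[OF tendsto_const] filterlim_at_top_imp_at_infinity)
  then have "(\<lambda>n. ereal (c / real (card_E n))) \<longlonglongrightarrow> 0"
    by (simp add: zero_ereal_def tendsto_ereal)
  then show ?thesis
    by (intro lim_imp_Limsup) simp_all
qed

theorem proposition1:
  fixes T1 T2 :: mat2
  assumes "zero_one_mat T1" and "zero_one_mat T2"
    and "no_zero_row T1" and "no_zero_row T2"
    and "weight (alpha T1 T2 1) = 1" and "weight (alpha T1 T2 2) = 1"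
  shows "entropy T1 T2 = 0"
proof -
  have "T1 i 1 + T1 i 2 = 1" and "T2 i 1 + T2 i 2 = 1" if "i \<in> {1,2}" for i
    using that row_sums_eq_one_if_weight_alpha_eq_one[OF assms(5)]
      row_sums_eq_one_if_weight_alpha_eq_one[OF assms(6)] by auto
  then have "gamma_s1 T1 T2 1 n + gamma_s1 T1 T2 2 n = 2" for n
    using gam_eq_one_if_row_sums_eq_one(1) by (simp add: gamma_s1_def)
  then show ?thesis
    unfolding entropy_def using limsup_const_over_card_E by simp
qed

end
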